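(* Let $m\ge 1$ and $\alpha\in(0,1]$. Restrict to elections with $m$ alternatives and to metrics given by the 1-Euclidean space, meaning all agents and alternatives are points of $\mathbb R$ and $d(x,y)=|x-y|$. Then every deterministic voting rule $f$ using ranked preferences with intensities has, under mandatory elicitation, distortion at least $$\frac{1+3\alpha^{-\lfloor m/2\rfloor}}{3+\alpha^{-\lfloor m/2\rfloor}}.$$
   Context: An election $\mathcal E=(N,A,\vec\sigma)$ has agents $N$, alternatives $A$ with $|A|=m$, and for each agent $i$ a preference $\sigma_i=(\pi_i,\Join_i)$. Here $\pi_i:[m]\to A$ is a bijection ($\pi_i(1)$ most preferred) and $\Join_i:[m-1]\to\{\succ,\succ\!\!\succ\}$. The profile $\vec\sigma$ is $\alpha$-consistent with $d$ (mandatory elicitation) if for all $i$ and $j\in[m-1]$: - $\Join_i(j)=\,\succ$ implies $d(i,\pi_i(j+1))\ge d(i,\pi_i(j))>\alpha d(i,\pi_i(j+1))$; - $\Join_i(j)=\,\succ\!\!\succ$ implies $d(i,\pi_i(j))\le\alpha d(i,\pi_i(j+1))$. The distortion of $a$ is $\mathsf{dist}_\alpha(a,\mathcal E)=\sup_d\sum_i d(i,a)/\min_b\sum_i d(i,b)$ over 1-Euclidean metrics $d$ with which $\vec\sigma$ is $\alpha$-consistent. The distortion of $f$ is the supremum of $\mathsf{dist}_\alpha(f(\vec\sigma),\mathcal E)$ over all such elections with $m$ alternatives. *)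

theory Defs
  imports "HOL-Library.Extended_Real"
begin

text \<open>Alternatives are 0,...,m-1 (type nat); agents are 0,...,n-1 with n \<ge> 1.
  A preference is a pair (pi, J): pi maps positions 1..m bijectively onto the
  alternatives (pi 1 most preferred), J maps 1..m-1 to an intensity.\<close>

datatype intensity = Succ | SSucc

type_synonym pref = "(nat \<Rightarrow> nat) \<times> (nat \<Rightarrow> intensity)"

definition valid_profile :: "nat \<Rightarrow> nat \<Rightarrow> (nat \<Rightarrow> pref) \<Rightarrow> bool" where
  "valid_profile m n prof \<longleftrightarrow> (\<forall>i<n. bij_betw (fst (prof i)) {1..m} {0..<m})"

text \<open>1-Euclidean metric: agent i at x i, alternative a at y a, d(i,a) = |x i - y a|.
  Mandatory-elicitation alpha-consistency.\<close>
definition consistent ::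
  "real \<Rightarrow> nat \<Rightarrow> nat \<Rightarrow> (nat \<Rightarrow> pref) \<Rightarrow> (nat \<Rightarrow> real) \<Rightarrow> (nat \<Rightarrow> real) \<Rightarrow> bool" where
  "consistent \<alpha> m n prof x y \<longleftrightarrow>
     (\<forall>i<n. \<forall>j\<in>{1..m-1}.
        (snd (prof i) j = Succ \<longrightarrow>
           \<bar>x i - y (fst (prof i) (j+1))\<bar> \<ge> \<bar>x i - y (fst (prof i) j)\<bar> \<and>
           \<bar>x i - y (fst (prof i) j)\<bar> > \<alpha> * \<bar>x i - y (fst (prof i) (j+1))\<bar>) \<and>
        (snd (prof i) j = SSucc \<longrightarrow>
           \<bar>x i - y (fst (prof i) j)\<bar> \<le> \<alpha> * \<bar>x i - y (fst (prof i) (j+1))\<bar>))"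

definition social_cost :: "nat \<Rightarrow> (nat \<Rightarrow> real) \<Rightarrow> (nat \<Rightarrow> real) \<Rightarrow> nat \<Rightarrow> real" where
  "social_cost n x y a = (\<Sum>i<n. \<bar>x i - y a\<bar>)"

definition opt_cost :: "nat \<Rightarrow> nat \<Rightarrow> (nat \<Rightarrow> real) \<Rightarrow> (nat \<Rightarrow> real) \<Rightarrow> real" where
  "opt_cost m n x y = (MIN b\<in>{0..<m}. social_cost n x y b)"

text \<open>Distortion of alternative a in the election (n agents, m alternatives, profile prof),
  as an extended real (positive/0 = \<infinity>, 0/0 = 0).\<close>
definition dist_alt :: "real \<Rightarrow> nat \<Rightarrow> nat \<Rightarrow> (nat \<Rightarrow> pref) \<Rightarrow> nat \<Rightarrow> ereal" where
  "dist_alt \<alpha> m n prof a =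
     (SUP xy\<in>{(x, y). consistent \<alpha> m n prof x y}.
        ereal (social_cost n (fst xy) (snd xy) a) / ereal (opt_cost m n (fst xy) (snd xy)))"

definition distortion :: "real \<Rightarrow> nat \<Rightarrow> (nat \<Rightarrow> (nat \<Rightarrow> pref) \<Rightarrow> nat) \<Rightarrow> ereal" where
  "distortion \<alpha> m f =
     (SUP np\<in>{(n, prof). n \<ge> 1 \<and> valid_profile m n prof}.
        dist_alt \<alpha> m (fst np) (snd np) (f (fst np) (snd np)))"

end

theory Submission
  imports Defs
begin

(* Take k = m div 2 and two agents. Agent 0 ranks the block {0..k-1} above the block {k..2k-1},
   agent 1 ranks them the other way round; for odd m both rank alternative 2k last. All
   intensities before position 2k are weak. Weak steps may grow a distance by any factor r < 1/alpha,
   so in k steps an agent's distances can climb geometrically from 1-s to 1+s as long as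
   (1+s)/(1-s) < alpha^-k. This realises the profile by two mirror-image configurations on the line:
   in the first, block {0..k-1} (and 2k) has social cost at least 2+s while alternative k costs 2-s;
   in the second, block {k..2k-1} costs 2+s while alternative 0 costs 2-s. Whatever f chooses, one
   configuration gives distortion (2+s)/(2-s), and letting (1+s)/(1-s) tend to alpha^-k gives the
   bound. *)

definition consistent_dists :: "real \<Rightarrow> nat \<Rightarrow> (nat \<Rightarrow> intensity) \<Rightarrow> (nat \<Rightarrow> real) \<Rightarrow> bool" where
  "consistent_dists \<alpha> m J D \<longleftrightarrow> (\<forall>j\<in>{1..m-1}.
     (J j = Succ \<longrightarrow> D j \<le> D (j+1) \<and> \<alpha> * D (j+1) < D j) \<and>
     (J j = SSucc \<longrightarrow> D j \<le> \<alpha> * D (j+1)))"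

lemma consistent_iff_consistent_dists:
  "consistent \<alpha> m n prof x y \<longleftrightarrow>
     (\<forall>i<n. consistent_dists \<alpha> m (snd (prof i)) (\<lambda>j. \<bar>x i - y (fst (prof i) j)\<bar>))"
  by (simp add: consistent_def consistent_dists_def)

lemma consistent_dists_cong:
  assumes "\<And>j. 1 \<le> j \<Longrightarrow> j \<le> m \<Longrightarrow> D j = D' j"
  shows "consistent_dists \<alpha> m J D \<longleftrightarrow> consistent_dists \<alpha> m J D'"
proof -
  have "D j = D' j \<and> D (j+1) = D' (j+1)" if "j \<in> {1..m-1}" for j
    using that assms by auto
  then show ?thesis unfolding consistent_dists_def by (intro ball_cong) auto
qed

lemma social_cost_two: "social_cost 2 x y a = \<bar>x 0 - y a\<bar> + \<bar>x 1 - y a\<bar>"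
  by (simp add: social_cost_def numeral_2_eq_2)

lemma ratio_le_dist_alt:
  assumes cons: "consistent \<alpha> m n prof x y" and "b < m"
    and pos: "\<And>c. c < m \<Longrightarrow> 0 < social_cost n x y c"
  shows "ereal (social_cost n x y a / social_cost n x y b) \<le> dist_alt \<alpha> m n prof a"
proof -
  have opt_le: "opt_cost m n x y \<le> social_cost n x y b"
    unfolding opt_cost_def using \<open>b < m\<close> by (intro Min_le) auto
  have opt_pos: "0 < opt_cost m n x y"
    unfolding opt_cost_def using \<open>b < m\<close> pos by auto
  have "social_cost n x y a / social_cost n x y b \<le> social_cost n x y a / opt_cost m n x y"
    using opt_le opt_pos by (intro divide_left_mono) (auto simp: social_cost_def sum_nonneg)
  also have "ereal \<dots> = ereal (social_cost n x y a) / ereal (opt_cost m n x y)"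
    using opt_pos by simp
  also have "\<dots> \<le> dist_alt \<alpha> m n prof a"
    unfolding dist_alt_def by (rule SUP_upper2[where i="(x, y)"]) (use cons in auto)
  finally show ?thesis by simp
qed

lemma dist_alt_le_distortion:
  "n \<ge> 1 \<Longrightarrow> valid_profile m n prof \<Longrightarrow> dist_alt \<alpha> m n prof (f n prof) \<le> distortion \<alpha> m f"
  unfolding distortion_def by (rule SUP_upper2[where i="(n, prof)"]) auto

lemma distortion_ge_one:
  assumes "m \<ge> 1" and "0 < \<alpha>"
    and f: "\<And>n prof. n \<ge> 1 \<Longrightarrow> valid_profile m n prof \<Longrightarrow> f n prof < m"
  shows "1 \<le> distortion \<alpha> m f"
proof -
  define prof :: "nat \<Rightarrow> pref" where "prof = (\<lambda>_. (\<lambda>j. j - 1, \<lambda>_. SSucc))"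
  define y where "y = (\<lambda>p::nat. (1/\<alpha>) ^ p)"
  have valid: "valid_profile m 1 prof"
    unfolding valid_profile_def prof_def by (auto intro!: bij_betw_byWitness[where f'="\<lambda>p. p + 1"])
  \<comment> \<open>Placing alternative p at distance \<alpha>^-p makes every strong intensity tight.\<close>
  have "consistent \<alpha> m 1 prof (\<lambda>_. 0) y"
  proof -
    have "(1/\<alpha>) ^ (j - 1) = \<alpha> * (1/\<alpha>) ^ j" if "1 \<le> j" for j
      using that \<open>0 < \<alpha>\<close> by (cases j) auto
    then show ?thesis using \<open>0 < \<alpha>\<close> by (simp add: consistent_def prof_def y_def abs_mult)
  qed
  moreover have pos: "\<And>c. 0 < social_cost 1 (\<lambda>_. 0) y c"
    using \<open>0 < \<alpha>\<close> by (simp add: social_cost_def y_def)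
  ultimately have "ereal (social_cost 1 (\<lambda>_. 0) y (f 1 prof) / social_cost 1 (\<lambda>_. 0) y (f 1 prof))
      \<le> dist_alt \<alpha> m 1 prof (f 1 prof)"
    using f[OF _ valid] by (intro ratio_le_dist_alt) auto
  then have "ereal 1 \<le> dist_alt \<alpha> m 1 prof (f 1 prof)"
    using pos[of "f 1 prof"] by simp
  also have "\<dots> \<le> distortion \<alpha> m f"
    using dist_alt_le_distortion valid by simp
  finally show ?thesis by (simp add: one_ereal_def)
qed

definition block_intensity :: "nat \<Rightarrow> nat \<Rightarrow> intensity" where
  "block_intensity k j = (if j < 2*k then Succ else SSucc)"

definition swap_blocks :: "nat \<Rightarrow> nat \<Rightarrow> nat" where
  "swap_blocks k j = (if j \<le> k then j + k - 1 else if j \<le> 2*k then j - k - 1 else j - 1)"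

definition block_profile :: "nat \<Rightarrow> nat \<Rightarrow> pref" where
  "block_profile k i = (if i = 0 then (\<lambda>j. j - 1) else swap_blocks k, block_intensity k)"

lemma valid_block_profile:
  assumes "2*k \<le> m"
  shows "valid_profile m 2 (block_profile k)"
proof -
  have "bij_betw (\<lambda>j. j - 1) {1..m} {0..<m}"
    by (rule bij_betw_byWitness[where f'="\<lambda>p. p + 1"]) auto
  moreover have "bij_betw (swap_blocks k) {1..m} {0..<m}"
    by (rule bij_betw_byWitness[where
          f'="\<lambda>p. if p < k then p + k + 1 else if p < 2*k then p - k + 1 else p + 1"])
      (use assms in \<open>auto simp: swap_blocks_def\<close>)
  ultimately show ?thesis
    unfolding valid_profile_def block_profile_def by (auto simp: less_2_cases_iff)
qed

lemma consistent_dists_block_intensity: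
  assumes "0 \<le> \<alpha>" "\<alpha> * r < 1"
    and succ: "\<And>j. 1 \<le> j \<Longrightarrow> j < 2*k \<Longrightarrow> 0 < D j \<and> D j \<le> D (j+1) \<and> D (j+1) \<le> r * D j"
    and ssucc: "\<And>j. 2*k \<le> j \<Longrightarrow> j < m \<Longrightarrow> D j \<le> \<alpha> * D (j+1)"
  shows "consistent_dists \<alpha> m (block_intensity k) D"
  unfolding consistent_dists_def
proof (intro ballI)
  fix j assume j: "j \<in> {1..m-1}"
  show "(block_intensity k j = Succ \<longrightarrow> D j \<le> D (j+1) \<and> \<alpha> * D (j+1) < D j) \<and>
        (block_intensity k j = SSucc \<longrightarrow> D j \<le> \<alpha> * D (j+1))"
  proof (cases "j < 2*k")
    case True
    with j succ have D: "0 < D j" "D j \<le> D (j+1)" "D (j+1) \<le> r * D j" by auto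
    have "\<alpha> * D (j+1) \<le> \<alpha> * (r * D j)" using D(3) assms(1) by (rule mult_left_mono)
    also have "\<dots> < 1 * D j" unfolding mult.assoc[symmetric]
      using assms(2) D(1) by (rule mult_strict_right_mono)
    finally show ?thesis using True D by (simp add: block_intensity_def)
  next
    case False
    with j have "D j \<le> \<alpha> * D (j+1)" by (intro ssucc) auto
    with False show ?thesis by (simp add: block_intensity_def)
  qed
qed

locale two_block_election =
  fixes m k :: nat and \<alpha> s r :: real
  assumes blocks: "m div 2 = k" and k_pos: "1 \<le> k"
    and \<alpha>_pos: "0 < \<alpha>" and r_ge_1: "1 \<le> r" and \<alpha>_r: "\<alpha> * r < 1"
    and s_nonneg: "0 \<le> s" and s_lt_1: "s < 1" and ramp_end: "(1 - s) * r ^ k = 1 + s"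
begin

definition ramp :: "nat \<Rightarrow> real" where
  "ramp i = (1 - s) * r ^ i"

definition far :: real where
  "far = 3 / \<alpha>"

lemma \<alpha>_lt_1: "\<alpha> < 1"
proof -
  have "\<alpha> * 1 \<le> \<alpha> * r" using \<alpha>_pos r_ge_1 by (intro mult_left_mono) auto
  with \<alpha>_r show ?thesis by simp
qed

lemma \<alpha>_far: "\<alpha> * far = 3"
  using \<alpha>_pos by (simp add: far_def)

lemma far_ge_3: "3 \<le> far"
  using \<alpha>_pos \<alpha>_lt_1 by (simp add: far_def le_divide_eq)

lemma ramp_0 [simp]: "ramp 0 = 1 - s"
  by (simp add: ramp_def)

lemma ramp_mono: "i \<le> i' \<Longrightarrow> ramp i \<le> ramp i'"
  unfolding ramp_def using s_lt_1 r_ge_1 by (simp add: power_increasing)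

lemma ramp_ge: "1 - s \<le> ramp i"
  using ramp_mono[of 0 i] by simp

lemma ramp_le: "i \<le> k \<Longrightarrow> ramp i \<le> 1 + s"
  using ramp_mono[of i k] ramp_end by (simp add: ramp_def)

lemma ramp_step:
  assumes "0 \<le> c" "i' = i \<or> i' = Suc i"
  shows "c + ramp i \<le> c + ramp i' \<and> c + ramp i' \<le> r * (c + ramp i)"
proof -
  have "c + ramp i \<le> r * (c + ramp i)"
    using mult_right_mono[OF r_ge_1, of "c + ramp i"] ramp_ge[of i] s_lt_1 assms(1) by simp
  moreover have "c + ramp (Suc i) \<le> r * (c + ramp i)"
    using assms(1) r_ge_1 mult_right_mono[OF r_ge_1 assms(1)] by (simp add: ramp_def algebra_simps)
  ultimately show ?thesis using assms(2) ramp_mono[of i "Suc i"] by auto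
qed

lemma m_le: "2*k \<le> m" "m \<le> 2*k + 1"
  using blocks by linarith+

(* The truncated subtraction j - 1 - k vanishes for j \<le> k + 1, so the first k + 1 far
   distances all equal 1. *)
definition far_dists :: "nat \<Rightarrow> real" where
  "far_dists j = (if j \<le> 2*k then s + ramp (j - 1 - k) else far)"

definition near_dists :: "nat \<Rightarrow> real" where
  "near_dists j = (if j \<le> 2*k then ramp (min (j - 1) k) else far - s)"

lemma consistent_far_dists: "consistent_dists \<alpha> m (block_intensity k) far_dists"
proof (rule consistent_dists_block_intensity[OF _ \<alpha>_r])
  fix j assume j: "1 \<le> j" "j < 2*k"
  have "j + 1 - 1 - k = j - 1 - k \<or> j + 1 - 1 - k = Suc (j - 1 - k)" by linarith
  then show "0 < far_dists j \<and> far_dists j \<le> far_dists (j+1) \<and> far_dists (j+1) \<le> r * far_dists j"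
    using j ramp_step[OF s_nonneg] ramp_ge[of "j - 1 - k"] s_lt_1 by (simp add: far_dists_def)
next
  fix j assume "2*k \<le> j" "j < m"
  then have "j = 2*k" using m_le by simp
  then show "far_dists j \<le> \<alpha> * far_dists (j+1)"
    using ramp_le[of "k - 1"] s_lt_1 \<alpha>_far by (simp add: far_dists_def)
qed (use \<alpha>_pos in simp)

lemma consistent_near_dists: "consistent_dists \<alpha> m (block_intensity k) near_dists"
proof (rule consistent_dists_block_intensity[OF _ \<alpha>_r])
  fix j assume j: "1 \<le> j" "j < 2*k"
  have "min (j + 1 - 1) k = min (j - 1) k \<or> min (j + 1 - 1) k = Suc (min (j - 1) k)" by linarith
  then show "0 < near_dists j \<and> near_dists j \<le> near_dists (j+1) \<and> near_dists (j+1) \<le> r * near_dists j"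
    using j ramp_step[of 0] ramp_ge[of "min (j - 1) k"] s_lt_1 by (simp add: near_dists_def)
next
  fix j assume "2*k \<le> j" "j < m"
  then have "j = 2*k" using m_le by simp
  moreover have "\<alpha> * s \<le> s" using mult_right_mono[of \<alpha> 1 s] \<alpha>_lt_1 s_nonneg by simp
  then have "1 + s \<le> \<alpha> * (far - s)" using \<alpha>_far s_lt_1 by (simp add: right_diff_distrib)
  ultimately show "near_dists j \<le> \<alpha> * near_dists (j+1)"
    using ramp_end by (simp add: near_dists_def ramp_def)
qed (use \<alpha>_pos in simp)

(* In configuration A agent 0 sees far_dists and agent 1 sees near_dists; configuration B is its
   mirror image, with the two agents and the two blocks exchanged. *)
definition agents_A :: "nat \<Rightarrow> real" where
  "agents_A i = (if i = 0 then 0 else s)"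

definition alts_A :: "nat \<Rightarrow> real" where
  "alts_A p = (if p < k then -1 else if p < 2*k then s + ramp (p - k) else far)"

definition agents_B :: "nat \<Rightarrow> real" where
  "agents_B i = (if i = 0 then -s else 0)"

definition alts_B :: "nat \<Rightarrow> real" where
  "alts_B p = (if p < k then -(s + ramp p) else if p < 2*k then 1 else -far)"

lemma consistent_A: "consistent \<alpha> m 2 (block_profile k) agents_A alts_A"
proof -
  have "consistent_dists \<alpha> m (block_intensity k) (\<lambda>j. \<bar>agents_A 0 - alts_A (j - 1)\<bar>)"
  proof (subst consistent_dists_cong)
    show "\<bar>agents_A 0 - alts_A (j - 1)\<bar> = far_dists j" if "1 \<le> j" "j \<le> m" for j
      using that m_le ramp_ge[of "j - 1 - k"] far_ge_3 s_lt_1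
      by (auto simp: agents_A_def alts_A_def far_dists_def)
  qed (rule consistent_far_dists)
  moreover have "consistent_dists \<alpha> m (block_intensity k) (\<lambda>j. \<bar>agents_A 1 - alts_A (swap_blocks k j)\<bar>)"
  proof (subst consistent_dists_cong)
    show "\<bar>agents_A 1 - alts_A (swap_blocks k j)\<bar> = near_dists j" if "1 \<le> j" "j \<le> m" for j
      using that m_le ramp_ge[of "j - 1"] far_ge_3 s_nonneg s_lt_1 ramp_end
      by (auto simp: agents_A_def alts_A_def near_dists_def swap_blocks_def ramp_def)
  qed (rule consistent_near_dists)
  ultimately show ?thesis
    by (auto simp: consistent_iff_consistent_dists block_profile_def less_2_cases_iff)
qed

lemma consistent_B: "consistent \<alpha> m 2 (block_profile k) agents_B alts_B"
proof -
  have "consistent_dists \<alpha> m (block_intensity k) (\<lambda>j. \<bar>agents_B 0 - alts_B (j - 1)\<bar>)"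
  proof (subst consistent_dists_cong)
    show "\<bar>agents_B 0 - alts_B (j - 1)\<bar> = near_dists j" if "1 \<le> j" "j \<le> m" for j
      using that m_le ramp_ge[of "j - 1"] far_ge_3 s_nonneg s_lt_1 ramp_end
      by (auto simp: agents_B_def alts_B_def near_dists_def ramp_def)
  qed (rule consistent_near_dists)
  moreover have "consistent_dists \<alpha> m (block_intensity k) (\<lambda>j. \<bar>agents_B 1 - alts_B (swap_blocks k j)\<bar>)"
  proof (subst consistent_dists_cong)
    show "\<bar>agents_B 1 - alts_B (swap_blocks k j)\<bar> = far_dists j" if "1 \<le> j" "j \<le> m" for j
      using that m_le ramp_ge[of "j - k - 1"] far_ge_3 s_lt_1
      by (auto simp: agents_B_def alts_B_def far_dists_def swap_blocks_def)
  qed (rule consistent_far_dists)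
  ultimately show ?thesis
    by (auto simp: consistent_iff_consistent_dists block_profile_def less_2_cases_iff)
qed

lemma social_cost_A_ge_1: "1 \<le> social_cost 2 agents_A alts_A c"
  using ramp_ge[of "c - k"] far_ge_3 s_lt_1
  by (auto simp: social_cost_two agents_A_def alts_A_def)

lemma social_cost_A_outer: "a < k \<or> 2*k \<le> a \<Longrightarrow> 2 + s \<le> social_cost 2 agents_A alts_A a"
  using far_ge_3 s_nonneg s_lt_1 by (auto simp: social_cost_two agents_A_def alts_A_def)

lemma social_cost_A_k: "social_cost 2 agents_A alts_A k = 2 - s"
  using k_pos s_lt_1 by (simp add: social_cost_two agents_A_def alts_A_def)

lemma social_cost_B_ge_1: "1 \<le> social_cost 2 agents_B alts_B c"
  using ramp_ge[of c] far_ge_3 s_lt_1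
  by (auto simp: social_cost_two agents_B_def alts_B_def)

lemma social_cost_B_inner: "k \<le> a \<Longrightarrow> a < 2*k \<Longrightarrow> social_cost 2 agents_B alts_B a = 2 + s"
  using s_nonneg by (simp add: social_cost_two agents_B_def alts_B_def)

lemma social_cost_B_0: "social_cost 2 agents_B alts_B 0 = 2 - s"
  using k_pos s_lt_1 by (simp add: social_cost_two agents_B_def alts_B_def)

lemma dist_alt_block_profile_ge:
  assumes "a < m"
  shows "ereal ((2 + s) / (2 - s)) \<le> dist_alt \<alpha> m 2 (block_profile k) a"
proof -
  have bound: "ereal ((2 + s) / (2 - s)) \<le> dist_alt \<alpha> m 2 (block_profile k) a"
    if cons: "consistent \<alpha> m 2 (block_profile k) x y" and "b < m"
      and ge_1: "\<And>c. 1 \<le> social_cost 2 x y c"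
      and "2 + s \<le> social_cost 2 x y a" and "social_cost 2 x y b = 2 - s" for x y b
  proof -
    have "(2 + s) / (2 - s) \<le> social_cost 2 x y a / social_cost 2 x y b"
      using that s_nonneg s_lt_1 by (intro frac_le) auto
    also have "ereal \<dots> \<le> dist_alt \<alpha> m 2 (block_profile k) a"
      using ge_1 by (intro ratio_le_dist_alt[OF cons \<open>b < m\<close>]) (simp add: less_le_trans[OF zero_less_one])
    finally show ?thesis by simp
  qed
  have "k < m" using m_le k_pos by linarith
  show ?thesis
  proof (cases "k \<le> a \<and> a < 2*k")
    case True
    then show ?thesis
      using bound[OF consistent_B, of 0] \<open>k < m\<close> social_cost_B_ge_1 social_cost_B_inner social_cost_B_0
      by simp
  next
    case False
    then have "2 + s \<le> social_cost 2 agents_A alts_A a" by (intro social_cost_A_outer) auto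
    then show ?thesis
      using bound[OF consistent_A \<open>k < m\<close>] social_cost_A_ge_1 social_cost_A_k by simp
  qed
qed

end

lemma exists_ramp_parameters:
  fixes \<alpha> z :: real and k :: nat
  assumes "1 \<le> k" "0 < \<alpha>" "\<alpha> < 1"
    and z: "z < (1 + 3 * (1/\<alpha>) ^ k) / (3 + (1/\<alpha>) ^ k)"
  obtains s r where "0 \<le> s" "s < 1" "1 \<le> r" "\<alpha> * r < 1" "(1 - s) * r ^ k = 1 + s"
    and "z < (2 + s) / (2 - s)"
proof -
  define A where "A = (1/\<alpha>) ^ k"
  have "1 < A" unfolding A_def using assms by (simp add: one_less_power)
  \<comment> \<open>R = r^k = (1+s)/(1-s) turns (2+s)/(2-s) into (1+3R)/(3+R), which tends to the bound as R tends to A.\<close>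
  obtain R where R: "1 \<le> R" "R < A" "z < (1 + 3*R) / (3 + R)"
  proof -
    define B where "B = (1 + 3*A) / (3 + A)"
    have "1 < B" "B < 3" "z < B" using z \<open>1 < A\<close> unfolding B_def A_def by (simp_all add: field_simps)
    define y where "y = (max z 1 + B) / 2"
    have y: "1 \<le> y" "y < 3" "z < y" "y < B" using \<open>1 < B\<close> \<open>B < 3\<close> \<open>z < B\<close> by (auto simp: y_def)
    then have "y * (3 + A) < 1 + 3*A" using \<open>1 < A\<close> by (simp add: B_def field_simps)
    show thesis
    proof (rule that[of "(3*y - 1) / (3 - y)"])
      show "1 \<le> (3*y - 1) / (3 - y)" "(3*y - 1) / (3 - y) < A"
        using y \<open>y * (3 + A) < 1 + 3*A\<close> by (simp_all add: field_simps)
      have "(1 + 3 * ((3*y - 1) / (3 - y))) / (3 + (3*y - 1) / (3 - y)) = y"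
        using y by (simp add: field_simps)
      then show "z < (1 + 3 * ((3*y - 1) / (3 - y))) / (3 + (3*y - 1) / (3 - y))"
        using y by simp
    qed
  qed
  define r where "r = root k R"
  define s where "s = (R - 1) / (R + 1)"
  have "0 < k" using assms(1) by simp
  have "r ^ k = R" "1 \<le> r" unfolding r_def using \<open>0 < k\<close> R(1) by simp_all
  have "r < root k A" unfolding r_def using \<open>0 < k\<close> R(2) by simp
  also have "root k A = 1/\<alpha>" unfolding A_def using \<open>0 < k\<close> assms(2) by (simp add: real_root_power_cancel)
  finally have "\<alpha> * r < 1" using assms(2) by (simp add: field_simps)
  moreover have "0 \<le> s" "s < 1" "(1 - s) * r ^ k = 1 + s"
    unfolding s_def \<open>r ^ k = R\<close> using R(1) by (auto simp: field_simps)
  moreover have "(2 + s) / (2 - s) = (1 + 3*R) / (3 + R)"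
  proof -
    have "2 + s = (1 + 3*R) / (R + 1)" "2 - s = (3 + R) / (R + 1)"
      unfolding s_def using R(1) by (simp_all add: field_simps)
    then show ?thesis using R(1) by simp
  qed
  ultimately show thesis using that \<open>1 \<le> r\<close> R(3) by simp
qed

lemma ereal_le_of_forall_less:
  assumes "\<And>z. z < x \<Longrightarrow> ereal z \<le> y"
  shows "ereal x \<le> y"
proof (rule dense_le)
  fix w assume "w < ereal x"
  then obtain z where "w < ereal z" "z < x" using ereal_dense2 by force
  then show "w \<le> y" using assms[of z] by simp
qed

lemma dist_alt_block_profile_ge_bound:
  assumes "m div 2 = k" "1 \<le> k" "0 < \<alpha>" "\<alpha> < 1" "a < m"
  shows "ereal ((1 + 3 * (1/\<alpha>) ^ k) / (3 + (1/\<alpha>) ^ k)) \<le> dist_alt \<alpha> m 2 (block_profile k) a"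
proof (rule ereal_le_of_forall_less)
  fix z assume "z < (1 + 3 * (1/\<alpha>) ^ k) / (3 + (1/\<alpha>) ^ k)"
  then obtain s r where "0 \<le> s" "s < 1" "1 \<le> r" "\<alpha> * r < 1" "(1 - s) * r ^ k = 1 + s"
    and "z < (2 + s) / (2 - s)"
    using exists_ramp_parameters assms(2-4) by blast
  then interpret two_block_election m k \<alpha> s r
    using assms(1-3) by unfold_locales simp_all
  have "ereal z \<le> ereal ((2 + s) / (2 - s))" using \<open>z < (2 + s) / (2 - s)\<close> by simp
  also have "\<dots> \<le> dist_alt \<alpha> m 2 (block_profile k) a"
    using \<open>a < m\<close> by (rule dist_alt_block_profile_ge)
  finally show "ereal z \<le> dist_alt \<alpha> m 2 (block_profile k) a" .
qed

theorem theorem8: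
  fixes m :: nat and \<alpha> :: real and f :: "nat \<Rightarrow> (nat \<Rightarrow> pref) \<Rightarrow> nat"
  assumes "m \<ge> 1" and "0 < \<alpha>" and "\<alpha> \<le> 1"
    and "\<And>n prof. n \<ge> 1 \<Longrightarrow> valid_profile m n prof \<Longrightarrow> f n prof < m"
  shows "ereal ((1 + 3 * (1/\<alpha>) ^ (m div 2)) / (3 + (1/\<alpha>) ^ (m div 2))) \<le> distortion \<alpha> m f"
proof (cases "\<alpha> = 1 \<or> m div 2 = 0")
  case True
  then have "(1 + 3 * (1/\<alpha>) ^ (m div 2)) / (3 + (1/\<alpha>) ^ (m div 2)) = 1" by auto
  with distortion_ge_one[OF assms(1,2,4)] show ?thesis by (simp add: one_ereal_def)
next
  case False
  define k where "k = m div 2"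
  define prof where "prof = block_profile k"
  have "1 \<le> k" "\<alpha> < 1" using False assms(3) by (auto simp: k_def)
  have valid: "valid_profile m 2 prof" unfolding prof_def by (rule valid_block_profile) (simp add: k_def)
  have "ereal ((1 + 3 * (1/\<alpha>) ^ k) / (3 + (1/\<alpha>) ^ k)) \<le> dist_alt \<alpha> m 2 prof (f 2 prof)"
    unfolding prof_def using k_def \<open>1 \<le> k\<close> assms(2) \<open>\<alpha> < 1\<close> assms(4)[OF _ valid]
    by (intro dist_alt_block_profile_ge_bound) (simp_all add: prof_def)
  also have "\<dots> \<le> distortion \<alpha> m f" using dist_alt_le_distortion valid by simp
  finally show ?thesis unfolding k_def .
qed

end
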